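(* Let $n\ge 4$, let $K'\subseteq[k]$ with $|K'|\ge n$, let $\pi$ assign to each $n$-element subset $S\subseteq[k]$ a string $\pi(S)$ of length $n$ that is an ordering of $S$, and suppose every $(n-1)$-element subset $R\subseteq K'$ is semi-frozen, with a fixed choice of semi-freezing function $h_R$ and wildcard index $w_R$. Then for every $Q\subseteq K'$ with $|Q|=n-2$ there exists $T_Q\subseteq Q$ with $|T_Q|=n-4$ such that $h_R(t)=h_{R'}(t)$ for all $t\in T_Q$ and all $(n-1)$-element sets $R,R'\subseteq K'$ containing $Q$.
   Context: $[k]=\{1,\dots,k\}$; $\pi(S)[i]$ is the letter at position $i\in[n]$ of $\pi(S)$. For a set $R\subseteq[k]$, $\mathcal U_R$ is the set of all sets $S\subseteq[k]$ with $R\subset S$ and $|S|=|R|+1$. A set $R$ with $|R|=n-1$ is semi-frozen with semi-freezing function $h_R$ and wildcard index $w_R$ if $h_R:R\to[n]$ is one-to-one, $w_R$ is the unique index of $[n]$ not in the image of $h_R$, and for every $r\in R$ and every $S\in\mathcal U_R$, either $\pi(S)[h_R(r)]=r$ or $\pi(S)[w_R]=r$. *)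

theory Defs
  imports Main
begin

text \<open>Strings are lists; positions are 1-indexed: pi(S)[i] = (pi S) ! (i - 1).\<close>

definition letter_at :: "nat list \<Rightarrow> nat \<Rightarrow> nat" where
  "letter_at s i = s ! (i - 1)"

definition valid_pi :: "nat \<Rightarrow> nat \<Rightarrow> (nat set \<Rightarrow> nat list) \<Rightarrow> bool" where
  "valid_pi k n pi \<longleftrightarrow>
     (\<forall>S. S \<subseteq> {1..k} \<and> card S = n \<longrightarrow>
        length (pi S) = n \<and> distinct (pi S) \<and> set (pi S) = S)"

definition U_set :: "nat \<Rightarrow> nat set \<Rightarrow> nat set set" where
  "U_set k R = {S. S \<subseteq> {1..k} \<and> R \<subset> S \<and> card S = card R + 1}"

definition semi_frozen ::
  "nat \<Rightarrow> nat \<Rightarrow> (nat set \<Rightarrow> nat list) \<Rightarrow> nat set \<Rightarrow> (nat \<Rightarrow> nat) \<Rightarrow> nat \<Rightarrow> bool" where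
  "semi_frozen k n pi R h w \<longleftrightarrow>
     card R = n - 1 \<and>
     inj_on h R \<and> h ` R \<subseteq> {1..n} \<and>
     {1..n} - h ` R = {w} \<and>
     (\<forall>r\<in>R. \<forall>S\<in>U_set k R.
        letter_at (pi S) (h r) = r \<or> letter_at (pi S) w = r)"

end

theory Submission
  imports Defs "HOL-Library.Disjoint_Sets"
begin

text \<open>Fix Q and let R, R' range over the (n-1)-subsets of K' containing Q. For R \<noteq> R' the set
  S = R \<union> R' lies in both U_R and U_R'; reading pi(S) at a position h_R(t) = h_R'(s) with
  s \<noteq> t in Q gives a contradiction, because every element of R can only sit at its own
  h_R-position or at the wildcard, and likewise for R'. Hence the value sets
  V t = {h_R(t) | R} (t \<in> Q) are pairwise disjoint nonempty subsets of [n]. As |Q| = n - 2, at most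
  two of them have more than one element, and the remaining n - 4 elements of Q form T.\<close>

lemma letter_at_in_set:
  assumes "length p = n" "i \<in> {1..n}"
  shows "letter_at p i \<in> set p"
  using assms by (auto simp: letter_at_def intro!: nth_mem)

lemma inj_on_letter_at:
  assumes "length p = n" "distinct p"
  shows "inj_on (letter_at p) {1..n}"
proof (rule inj_onI)
  fix i j assume ij: "i \<in> {1..n}" "j \<in> {1..n}" "letter_at p i = letter_at p j"
  then have "i - 1 = j - 1"
    using assms nth_eq_iff_index_eq by (fastforce simp: letter_at_def)
  then show "i = j" using ij(1,2) by auto
qed

lemma semi_freezing_collision_impossible:
  assumes p: "length p = n" "distinct p" "set p \<subseteq> R \<union> R'"
    and h: "inj_on h R" "h ` R \<subseteq> {1..n}" "\<forall>r\<in>R. letter_at p (h r) = r \<or> letter_at p w = r"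
    and h': "inj_on h' R'" "h' ` R' \<subseteq> {1..n}" "\<forall>r\<in>R'. letter_at p (h' r) = r \<or> letter_at p w' = r"
    and st: "s \<in> R \<inter> R'" "t \<in> R \<inter> R'" "s \<noteq> t"
  shows "h t \<noteq> h' s"
proof
  assume eq: "h t = h' s"
  define L where "L = letter_at p"
  define v where "v = h t"
  have v: "v \<in> {1..n}" using h(2) st(2) v_def by auto
  have L_inj: "x = v" if "x \<in> {1..n}" "L x = L v" for x
    using inj_on_letter_at[OF p(1,2)] that v unfolding L_def by (meson inj_on_def)
  have h_v: "r = t" if "r \<in> R" "L (h r) = L v" for r
  proof -
    have "h r = h t" using L_inj[of "h r"] that h(2) v_def by auto
    then show ?thesis using inj_onD[OF h(1)] that(1) st(2) by blast
  qed
  have h'_v: "r = s" if "r \<in> R'" "L (h' r) = L v" for r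
  proof -
    have "h' r = h' s" using L_inj[of "h' r"] that h'(2) eq v_def by auto
    then show ?thesis using inj_onD[OF h'(1)] that(1) st(1) by blast
  qed
  consider "L v = t" | "L v = s" | "L v \<noteq> t" "L v \<noteq> s" by blast
  then show False
  proof cases
    case 1
    \<comment> \<open>position v = h' s holds t, so s must sit at the wildcard of R'\<close>
    then have "L w' = s" using h'(3) st(1,3) eq v_def L_def by force
    then have "L (h' t) = t" using h'(3) st L_def by force
    then show False using h'_v st 1 by auto
  next
    case 2
    then have "L w = t" using h(3) st(2,3) v_def L_def by force
    then have "L (h s) = s" using h(3) st L_def by force
    then show False using h_v st 2 by auto
  next
    case 3
    then have ws: "L w = t" "L w' = s"
      using h(3) h'(3) st eq v_def L_def by force+
    have "L v \<in> R \<union> R'" using letter_at_in_set[OF p(1) v] p(3) L_def by auto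
    then show False
    proof
      assume r: "L v \<in> R"
      then have "L (h (L v)) = L v" using h(3) ws(1) 3 L_def by force
      then show False using h_v[OF r] 3 by blast
    next
      assume r: "L v \<in> R'"
      then have "L (h' (L v)) = L v" using h'(3) ws(2) 3 L_def by force
      then show False using h'_v[OF r] 3 by blast
    qed
  qed
qed

lemma semi_frozen_collision_impossible:
  assumes pi: "valid_pi k n pi"
    and sf: "semi_frozen k n pi R h w" "semi_frozen k n pi R' h' w'"
    and S: "S \<in> U_set k R" "S \<in> U_set k R'" "S \<subseteq> R \<union> R'"
    and st: "s \<in> R \<inter> R'" "t \<in> R \<inter> R'" "s \<noteq> t"
  shows "h t \<noteq> h' s"
proof -
  have "finite S" using S(1) by (auto simp: U_set_def intro: card_ge_0_finite)
  then have "finite R" using S(1) by (auto simp: U_set_def intro: finite_subset)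
  then have "card R \<ge> 1" using st(1) by (auto simp: Suc_le_eq card_gt_0_iff)
  then have "card S = n" using S(1) sf(1) by (simp add: U_set_def semi_frozen_def)
  moreover have "S \<subseteq> {1..k}" using S(1) by (simp add: U_set_def)
  ultimately have "length (pi S) = n" "distinct (pi S)" "set (pi S) = S"
    using pi by (auto simp: valid_pi_def)
  then show ?thesis
    using semi_freezing_collision_impossible[of "pi S" n R R' h w h' w' s t] sf S st
    by (auto simp: semi_frozen_def U_set_def)
qed

lemma union_in_U_set:
  assumes "R \<union> R' \<subseteq> {1..k}" "finite R'" "Q \<subseteq> R" "Q \<subseteq> R'"
    and "card R = card Q + 1" "card R' = card Q + 1" "R \<noteq> R'"
  shows "R \<union> R' \<in> U_set k R"
proof -
  have "finite Q" using assms(2,4) finite_subset by blast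
  then have "card (R' - Q) = 1" using assms(4,6) by (simp add: card_Diff_subset)
  then obtain b where b: "R' - Q = {b}" by (meson card_1_singletonE)
  then have R': "R' = insert b Q" using assms(4) by auto
  have "finite R" using assms(5) card.infinite by fastforce
  have "b \<notin> R"
  proof
    assume "b \<in> R"
    then have "R' \<subseteq> R" using R' assms(3) by auto
    then show False using card_subset_eq[OF \<open>finite R\<close>] assms(5-7) by metis
  qed
  moreover have "R \<union> R' = insert b R" using R' assms(3) by auto
  ultimately show ?thesis
    using assms(1) \<open>finite R\<close> by (auto simp: U_set_def)
qed

lemma card_add_card_multivalued_le:
  fixes V :: "'a \<Rightarrow> 'b set"
  assumes "finite Q" "finite A"
    and sub: "\<And>t. t \<in> Q \<Longrightarrow> V t \<subseteq> A" and ne: "\<And>t. t \<in> Q \<Longrightarrow> V t \<noteq> {}"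
    and disj: "disjoint_family_on V Q"
  shows "card Q + card {t\<in>Q. 2 \<le> card (V t)} \<le> card A"
proof -
  have fin: "\<And>t. t \<in> Q \<Longrightarrow> finite (V t)" using sub assms(2) finite_subset by blast
  have "card Q + card {t\<in>Q. 2 \<le> card (V t)} = (\<Sum>t\<in>Q. 1 + of_bool (2 \<le> card (V t)))"
    using assms(1) unfolding sum.distrib by (simp add: Int_def)
  also have "\<dots> \<le> (\<Sum>t\<in>Q. card (V t))"
    using fin ne by (intro sum_mono) (auto simp: Suc_le_eq card_gt_0_iff)
  also have "\<dots> = card (\<Union>t\<in>Q. V t)"
    using card_UN_disjoint'[OF disj fin assms(1)] by simp
  also have "\<dots> \<le> card A"
    using sub assms(2) by (intro card_mono) auto
  finally show ?thesis .
qed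

lemma obtain_subset_card_one_valued:
  fixes V :: "'a \<Rightarrow> 'b set"
  assumes "finite Q" "finite A"
    and sub: "\<And>t. t \<in> Q \<Longrightarrow> V t \<subseteq> A" and ne: "\<And>t. t \<in> Q \<Longrightarrow> V t \<noteq> {}"
    and disj: "disjoint_family_on V Q"
    and m: "m + card A \<le> 2 * card Q"
  obtains T where "T \<subseteq> Q" "card T = m" "\<And>t. t \<in> T \<Longrightarrow> card (V t) = 1"
proof -
  define B where "B = {t\<in>Q. 2 \<le> card (V t)}"
  have "card Q + card B \<le> card A"
    unfolding B_def by (rule card_add_card_multivalued_le[OF assms(1-5)])
  moreover have "card B \<le> card Q" "card (Q - B) = card Q - card B"
    using assms(1) by (auto simp: B_def card_Diff_subset intro: card_mono)
  ultimately have "m \<le> card (Q - B)" using m by linarith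
  then obtain T where T: "T \<subseteq> Q - B" "card T = m" by (meson obtain_subset_with_card_n)
  have "card (V t) = 1" if "t \<in> Q - B" for t
  proof -
    have "finite (V t)" using finite_subset[OF sub assms(2)] that by blast
    then have "0 < card (V t)" using ne that by (simp add: card_gt_0_iff)
    moreover have "card (V t) < 2" using that unfolding B_def by auto
    ultimately show ?thesis by linarith
  qed
  then show thesis using that T by blast
qed

lemma semi_freezing_eq_imp_eq:
  assumes "K' \<subseteq> {1..k}" "finite K'" "valid_pi k n pi"
    and sf: "\<forall>R. R \<subseteq> K' \<and> card R = n - 1 \<longrightarrow> semi_frozen k n pi R (h R) (w R)"
    and Q: "card Q = n - 2" "n \<ge> 2"
    and R: "R \<subseteq> K'" "card R = n - 1" "Q \<subseteq> R"
    and R': "R' \<subseteq> K'" "card R' = n - 1" "Q \<subseteq> R'"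
    and st: "s \<in> Q" "t \<in> Q" "h R t = h R' s"
  shows "t = s"
proof (cases "R = R'")
  case True
  have "inj_on (h R) R" using sf R by (simp add: semi_frozen_def)
  then show ?thesis
    by (rule inj_onD) (use True R(3) st in auto)
next
  case False
  have "finite R" "finite R'" using finite_subset R(1) R'(1) assms(2) by blast+
  have cards: "card R = card Q + 1" "card R' = card Q + 1" using Q R(2) R'(2) by auto
  have "R \<union> R' \<subseteq> {1..k}" using R(1) R'(1) assms(1) by auto
  then have U: "R \<union> R' \<in> U_set k R" "R' \<union> R \<in> U_set k R'"
    using union_in_U_set[OF _ \<open>finite R'\<close> R(3) R'(3) cards False]
      union_in_U_set[OF _ \<open>finite R\<close> R'(3) R(3) cards(2,1) not_sym[OF False]]
    by (simp_all add: Un_commute)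
  have sf_RR': "semi_frozen k n pi R (h R) (w R)" "semi_frozen k n pi R' (h R') (w R')"
    using sf R R' by blast+
  show ?thesis
  proof (rule ccontr)
    assume "t \<noteq> s"
    then have "h R t \<noteq> h R' s"
      using semi_frozen_collision_impossible[OF assms(3) sf_RR' U(1)] U(2) R(3) R'(3) st(1,2)
      by (simp add: Un_commute subset_iff)
    then show False using st(3) by blast
  qed
qed

lemma semi_freezing_values_subset:
  assumes "\<forall>R. R \<subseteq> K' \<and> card R = n - 1 \<longrightarrow> semi_frozen k n pi R (h R) (w R)" "t \<in> Q"
  shows "(\<lambda>R. h R t) ` {R. R \<subseteq> K' \<and> card R = n - 1 \<and> Q \<subseteq> R} \<subseteq> {1..n}"
proof
  fix x assume "x \<in> (\<lambda>R. h R t) ` {R. R \<subseteq> K' \<and> card R = n - 1 \<and> Q \<subseteq> R}"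
  then obtain R where R: "R \<subseteq> K'" "card R = n - 1" "Q \<subseteq> R" "x = h R t" by blast
  then have "h R ` R \<subseteq> {1..n}" using assms(1) by (simp add: semi_frozen_def)
  then show "x \<in> {1..n}" using R(3,4) assms(2) by blast
qed

lemma semi_freezing_values_disjoint:
  assumes "K' \<subseteq> {1..k}" "finite K'" "valid_pi k n pi"
    and "\<forall>R. R \<subseteq> K' \<and> card R = n - 1 \<longrightarrow> semi_frozen k n pi R (h R) (w R)"
    and "card Q = n - 2" "n \<ge> 2"
  shows "disjoint_family_on (\<lambda>t. (\<lambda>R. h R t) ` {R. R \<subseteq> K' \<and> card R = n - 1 \<and> Q \<subseteq> R}) Q"
  unfolding disjoint_family_on_def
proof (intro ballI impI)
  fix s t assume st: "s \<in> Q" "t \<in> Q" "s \<noteq> t"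
  have "h R s \<noteq> h R' t" if "R \<subseteq> K' \<and> card R = n - 1 \<and> Q \<subseteq> R"
    and "R' \<subseteq> K' \<and> card R' = n - 1 \<and> Q \<subseteq> R'" for R R'
    using semi_freezing_eq_imp_eq[OF assms, where s=t and t=s] that st by blast
  then show "(\<lambda>R. h R s) ` {R. R \<subseteq> K' \<and> card R = n - 1 \<and> Q \<subseteq> R} \<inter>
      (\<lambda>R. h R t) ` {R. R \<subseteq> K' \<and> card R = n - 1 \<and> Q \<subseteq> R} = {}"
    by blast
qed

theorem lemma3p9:
  fixes k n :: nat and K' :: "nat set" and pi :: "nat set \<Rightarrow> nat list"
    and h :: "nat set \<Rightarrow> nat \<Rightarrow> nat" and w :: "nat set \<Rightarrow> nat"
  assumes "n \<ge> 4"
    and "K' \<subseteq> {1..k}" and "card K' \<ge> n"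
    and "valid_pi k n pi"
    and "\<forall>R. R \<subseteq> K' \<and> card R = n - 1 \<longrightarrow> semi_frozen k n pi R (h R) (w R)"
  shows "\<forall>Q. Q \<subseteq> K' \<and> card Q = n - 2 \<longrightarrow>
           (\<exists>T. T \<subseteq> Q \<and> card T = n - 4 \<and>
              (\<forall>t\<in>T. \<forall>R R'. R \<subseteq> K' \<and> card R = n - 1 \<and> Q \<subseteq> R \<and>
                              R' \<subseteq> K' \<and> card R' = n - 1 \<and> Q \<subseteq> R'
                              \<longrightarrow> h R t = h R' t))"
proof (intro allI impI)
  fix Q assume Q: "Q \<subseteq> K' \<and> card Q = n - 2"
  define Rs where "Rs = {R. R \<subseteq> K' \<and> card R = n - 1 \<and> Q \<subseteq> R}"
  define V where "V t = (\<lambda>R. h R t) ` Rs" for t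
  have "finite K'" using assms(1,3) card.infinite by fastforce
  then have "finite Q" using Q finite_subset by blast
  have V_sub: "V t \<subseteq> {1..n}" if "t \<in> Q" for t
    unfolding V_def Rs_def using semi_freezing_values_subset[OF assms(5) that] .
  have "\<not> K' \<subseteq> Q" using Q assms(1,3) card_mono[OF \<open>finite Q\<close>, of K'] by linarith
  then obtain a where "a \<in> K' - Q" by blast
  then have "insert a Q \<in> Rs" using Q assms(1) \<open>finite Q\<close> by (auto simp: Rs_def)
  then have V_ne: "V t \<noteq> {}" for t by (auto simp: V_def)
  have disj: "disjoint_family_on V Q"
    unfolding V_def Rs_def
    by (rule semi_freezing_values_disjoint[OF assms(2) \<open>finite K'\<close> assms(4,5)]) (use Q assms(1) in auto)
  have "n - 4 + card {1..n} \<le> 2 * card Q" using Q assms(1) by simp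
  then obtain T where T: "T \<subseteq> Q" "card T = n - 4" "\<And>t. t \<in> T \<Longrightarrow> card (V t) = 1"
    using obtain_subset_card_one_valued[of Q "{1..n}" V "n - 4"] \<open>finite Q\<close> V_sub V_ne disj
    by blast
  have "h R t = h R' t" if t: "t \<in> T" and RR': "R \<in> Rs" "R' \<in> Rs" for t R R'
  proof -
    obtain x where "V t = {x}" using T(3)[OF t] by (rule card_1_singletonE)
    moreover have "h R t \<in> V t" "h R' t \<in> V t" using RR' by (simp_all add: V_def)
    ultimately show ?thesis by simp
  qed
  then show "\<exists>T. T \<subseteq> Q \<and> card T = n - 4 \<and>
              (\<forall>t\<in>T. \<forall>R R'. R \<subseteq> K' \<and> card R = n - 1 \<and> Q \<subseteq> R \<and>
                              R' \<subseteq> K' \<and> card R' = n - 1 \<and> Q \<subseteq> R'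
                              \<longrightarrow> h R t = h R' t)"
    using T(1,2) by (intro exI[of _ T]) (auto simp: Rs_def)
qed

end
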